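(* Consider a finite MDP, a target policy $\pi$ and a behaviour policy $\mu$, and assume that for each state $x\in\mathcal{X}$ there is a unique greedy action $a^*(x)=\arg\max_{b\in\mathcal{A}}Q^\pi(x,b)$. Then there exists $\alpha\in(0,1)$ such that, letting $\widetilde{Q}_\alpha$ be the fixed point of the $\alpha$-Retrace operator $\mathcal{R}^\alpha$, the greedy policy with respect to $\widetilde{Q}_\alpha$ coincides with the greedy policy with respect to $Q^\pi$ (i.e. $\arg\max_b \widetilde{Q}_\alpha(x,b)=\{a^*(x)\}$ for all $x$), and the contraction rate of $\mathcal{R}^\alpha$ is no greater than that of $\mathcal{R}^1$ (standard Retrace). Further, if $\pi$ and $\mu$ are $(x,a)$-distinguishable under $\mu$ for all $(x,a)\in\mathcal{X}\times\mathcal{A}$, then the contraction rate of $\mathcal{R}^\alpha$ is strictly lower than that of $\mathcal{R}^1$.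
   Context: MDP: finite state space $\mathcal{X}$, finite action space $\mathcal{A}$, discount $\gamma\in[0,1)$, transition kernel $P$, bounded rewards with mean $r(x,a)$; $Q^\nu$ denotes the action-value function of a policy $\nu$. $\mathbb{E}_\mu[\cdot\mid X_0=x,A_0=a]$ denotes expectation over the trajectory with $X_{t+1}\sim P(\cdot|X_t,A_t)$, $A_{t+1}\sim\mu(\cdot|X_{t+1})$; empty products equal $1$. For target $\pi'$ and behaviour $\mu$, the Retrace operator is $$(\mathcal{R}_{\pi',\mu}Q)(x,a)=Q(x,a)+\mathbb{E}_\mu\Big[\sum_{t\ge0}\gamma^t\Big(\prod_{s=1}^t\min\big(1,\tfrac{\pi'(A_s|X_s)}{\mu(A_s|X_s)}\big)\Big)\Big(r(X_t,A_t)+\gamma\sum_{b}\pi'(b|X_{t+1})Q(X_{t+1},b)-Q(X_t,A_t)\Big)\,\Big|\,X_0=x,A_0=a\Big].$$ The $\alpha$-Retrace operator is $\mathcal{R}^\alpha=\mathcal{R}_{\alpha\pi+(1-\alpha)\mu,\mu}$. The contraction rate of an operator $T$ is $\sup_{Q\neq Q'}\|TQ-TQ'\|_\infty/\|Q-Q'\|_\infty$. The greedy policy with respect to $Q$ selects at each $x$ an action in $\arg\max_b Q(x,b)$. Policies $\pi,\mu$ are $(x,a)$-distinguishable under $\mu$ if some state $x'$ visited with positive probability at some time $t\ge0$ by the $\mu$-trajectory started from $(x,a)$ satisfies $\pi(\cdot|x')\neq\mu(\cdot|x')$. *)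

theory Defs
  imports Complex_Main
begin

text \<open>Finite MDP: states of type 'x::finite, actions of type 'a::finite.
  A transition kernel P x a y = probability of moving to y after action a in x.
  A policy nu x b = probability of choosing b in x.\<close>

definition is_kernel :: "('x::finite \<Rightarrow> 'a::finite \<Rightarrow> 'x \<Rightarrow> real) \<Rightarrow> bool" where
  "is_kernel P \<longleftrightarrow> (\<forall>x a y. 0 \<le> P x a y) \<and> (\<forall>x a. (\<Sum>y\<in>UNIV. P x a y) = 1)"

definition is_policy :: "('x::finite \<Rightarrow> 'a::finite \<Rightarrow> real) \<Rightarrow> bool" where
  "is_policy \<nu> \<longleftrightarrow> (\<forall>x b. 0 \<le> \<nu> x b) \<and> (\<forall>x. (\<Sum>b\<in>UNIV. \<nu> x b) = 1)"

text \<open>occ P nu x a t y b = Pr(X_t = y, A_t = b | X_0 = x, A_0 = a) for the trajectory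
  X_{t+1} ~ P(.|X_t,A_t), A_{t+1} ~ nu(.|X_{t+1}).\<close>

fun occ :: "('x::finite \<Rightarrow> 'a::finite \<Rightarrow> 'x \<Rightarrow> real) \<Rightarrow> ('x \<Rightarrow> 'a \<Rightarrow> real)
             \<Rightarrow> 'x \<Rightarrow> 'a \<Rightarrow> nat \<Rightarrow> 'x \<Rightarrow> 'a \<Rightarrow> real" where
  "occ P \<nu> x a 0 y b = (if y = x \<and> b = a then 1 else 0)"
| "occ P \<nu> x a (Suc t) y' b' =
     (\<Sum>y\<in>UNIV. \<Sum>b\<in>UNIV. occ P \<nu> x a t y b * P y b y' * \<nu> y' b')"

definition Qfun :: "('x::finite \<Rightarrow> 'a::finite \<Rightarrow> 'x \<Rightarrow> real) \<Rightarrow> real \<Rightarrow> ('x \<Rightarrow> 'a \<Rightarrow> real)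
                    \<Rightarrow> ('x \<Rightarrow> 'a \<Rightarrow> real) \<Rightarrow> 'x \<Rightarrow> 'a \<Rightarrow> real" where
  "Qfun P \<gamma> r \<nu> = (\<lambda>x a. \<Sum>t. \<gamma> ^ t * (\<Sum>y\<in>UNIV. \<Sum>b\<in>UNIV. occ P \<nu> x a t y b * r y b))"

definition trace_c :: "('x \<Rightarrow> 'a \<Rightarrow> real) \<Rightarrow> ('x \<Rightarrow> 'a \<Rightarrow> real) \<Rightarrow> 'x \<Rightarrow> 'a \<Rightarrow> real" where
  "trace_c \<pi>' \<mu> y b = min 1 (\<pi>' y b / \<mu> y b)"

text \<open>trw P pi' mu x a t y b =
  E_mu[(prod_{s=1}^t c(A_s|X_s)) * 1{X_t = y, A_t = b} | X_0 = x, A_0 = a].\<close>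

fun trw :: "('x::finite \<Rightarrow> 'a::finite \<Rightarrow> 'x \<Rightarrow> real) \<Rightarrow> ('x \<Rightarrow> 'a \<Rightarrow> real) \<Rightarrow> ('x \<Rightarrow> 'a \<Rightarrow> real)
             \<Rightarrow> 'x \<Rightarrow> 'a \<Rightarrow> nat \<Rightarrow> 'x \<Rightarrow> 'a \<Rightarrow> real" where
  "trw P \<pi>' \<mu> x a 0 y b = (if y = x \<and> b = a then 1 else 0)"
| "trw P \<pi>' \<mu> x a (Suc t) y' b' =
     (\<Sum>y\<in>UNIV. \<Sum>b\<in>UNIV. trw P \<pi>' \<mu> x a t y b * P y b y' * \<mu> y' b' * trace_c \<pi>' \<mu> y' b')"

text \<open>The Retrace operator R_{pi',mu}, with the expectation of the series written as the
  series of expectations over the finite state-action space.\<close>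

definition retrace :: "('x::finite \<Rightarrow> 'a::finite \<Rightarrow> 'x \<Rightarrow> real) \<Rightarrow> real \<Rightarrow> ('x \<Rightarrow> 'a \<Rightarrow> real)
      \<Rightarrow> ('x \<Rightarrow> 'a \<Rightarrow> real) \<Rightarrow> ('x \<Rightarrow> 'a \<Rightarrow> real)
      \<Rightarrow> ('x \<Rightarrow> 'a \<Rightarrow> real) \<Rightarrow> 'x \<Rightarrow> 'a \<Rightarrow> real" where
  "retrace P \<gamma> r \<pi>' \<mu> Q = (\<lambda>x a. Q x a +
     (\<Sum>t. \<gamma> ^ t * (\<Sum>y\<in>UNIV. \<Sum>b\<in>UNIV. trw P \<pi>' \<mu> x a t y b *
        (r y b + \<gamma> * (\<Sum>z\<in>UNIV. P y b z * (\<Sum>c\<in>UNIV. \<pi>' z c * Q z c)) - Q y b))))"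

definition alpha_retrace :: "('x::finite \<Rightarrow> 'a::finite \<Rightarrow> 'x \<Rightarrow> real) \<Rightarrow> real \<Rightarrow> ('x \<Rightarrow> 'a \<Rightarrow> real)
      \<Rightarrow> ('x \<Rightarrow> 'a \<Rightarrow> real) \<Rightarrow> ('x \<Rightarrow> 'a \<Rightarrow> real) \<Rightarrow> real
      \<Rightarrow> ('x \<Rightarrow> 'a \<Rightarrow> real) \<Rightarrow> 'x \<Rightarrow> 'a \<Rightarrow> real" where
  "alpha_retrace P \<gamma> r \<pi> \<mu> \<alpha> = retrace P \<gamma> r (\<lambda>x b. \<alpha> * \<pi> x b + (1 - \<alpha>) * \<mu> x b) \<mu>"

definition supnorm :: "('x::finite \<Rightarrow> 'a::finite \<Rightarrow> real) \<Rightarrow> real" where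
  "supnorm Q = Max {\<bar>Q x a\<bar> | x a. True}"

definition contraction_rate ::
    "(('x::finite \<Rightarrow> 'a::finite \<Rightarrow> real) \<Rightarrow> ('x \<Rightarrow> 'a \<Rightarrow> real)) \<Rightarrow> real" where
  "contraction_rate T = Sup {supnorm (\<lambda>x a. T Q x a - T Q' x a) / supnorm (\<lambda>x a. Q x a - Q' x a)
                             | Q Q'. Q \<noteq> Q'}"

definition fixed_point :: "(('x \<Rightarrow> 'a \<Rightarrow> real) \<Rightarrow> ('x \<Rightarrow> 'a \<Rightarrow> real)) \<Rightarrow> 'x \<Rightarrow> 'a \<Rightarrow> real" where
  "fixed_point T = (THE Q. T Q = Q)"

definition greedy :: "('x \<Rightarrow> 'a \<Rightarrow> real) \<Rightarrow> 'x \<Rightarrow> 'a set" where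
  "greedy Q x = {b. \<forall>c. Q x c \<le> Q x b}"

definition distinguishable :: "('x::finite \<Rightarrow> 'a::finite \<Rightarrow> 'x \<Rightarrow> real) \<Rightarrow> ('x \<Rightarrow> 'a \<Rightarrow> real)
      \<Rightarrow> ('x \<Rightarrow> 'a \<Rightarrow> real) \<Rightarrow> 'x \<Rightarrow> 'a \<Rightarrow> bool" where
  "distinguishable P \<pi> \<mu> x a \<longleftrightarrow>
     (\<exists>t x'. (\<Sum>b\<in>UNIV. occ P \<mu> x a t x' b) > 0 \<and> \<pi> x' \<noteq> \<mu> x')"

end

(*
  Everything is lifted to the finite space of state-action pairs. With A the transition matrix
  of the target policy pi' and B <= A the traced matrix
  B((x,a),(y,b)) = P(y|x,a) min(mu(b|y), pi'(b|y)), Retrace reads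
  R Q = Q + sum_t gamma^t B^t (r + gamma A Q - Q). The B-part of gamma A (Q - Q') is the next
  term of the series, so the difference telescopes to
  R Q - R Q' = sum_t gamma^(t+1) B^t (A - B) (Q - Q'), a nonnegative kernel of total mass
  k = 1 - (1 - gamma) sum_t gamma^t B^t 1. The resulting bound |R Q - R Q'| <= k |Q - Q'| is
  attained at Q - Q' = 1, so the contraction rate is exactly max k, which decreases as B grows.

  Mixing mu into the target only enlarges the trace: min(mu, alpha pi + (1 - alpha) mu) >=
  min(mu, pi). Hence alpha-Retrace contracts at least as fast as Retrace, and strictly faster
  when from every (x,a) a state where pi and mu differ is reachable, since the extra trace
  mass is then kept with positive probability. The fixed point of alpha-Retrace is the value
  of the mixed policy, which is within 2 (1 - alpha) |Q^pi| / (1 - gamma) of Q^pi; a unique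
  greedy action has a positive gap and therefore survives for alpha close to 1.
*)

theory Submission
  imports Defs
begin

section \<open>Sub-stochastic matrices and their powers\<close>

definition substochastic :: "('s::finite \<Rightarrow> 's \<Rightarrow> real) \<Rightarrow> bool" where
  "substochastic M \<longleftrightarrow> (\<forall>u v. 0 \<le> M u v) \<and> (\<forall>u. (\<Sum>v\<in>UNIV. M u v) \<le> 1)"

definition stochastic :: "('s::finite \<Rightarrow> 's \<Rightarrow> real) \<Rightarrow> bool" where
  "stochastic M \<longleftrightarrow> (\<forall>u v. 0 \<le> M u v) \<and> (\<forall>u. (\<Sum>v\<in>UNIV. M u v) = 1)"

lemma stochastic_imp_substochastic: "stochastic M \<Longrightarrow> substochastic M"
  by (simp add: stochastic_def substochastic_def)

lemma substochastic_le:
  assumes "substochastic A" "\<And>u v. 0 \<le> B u v" "\<And>u v. B u v \<le> A u v"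
  shows "substochastic B"
proof -
  have "(\<Sum>v\<in>UNIV. B u v) \<le> (\<Sum>v\<in>UNIV. A u v)" for u
    using assms(3) by (rule sum_mono)
  then show ?thesis
    using assms(1,2) unfolding substochastic_def by (meson order_trans)
qed

lemma substochastic_le_stochastic:
  "stochastic A \<Longrightarrow> (\<And>u v. 0 \<le> B u v) \<Longrightarrow> (\<And>u v. B u v \<le> A u v) \<Longrightarrow> substochastic B"
  by (rule substochastic_le[OF stochastic_imp_substochastic])

fun mpow :: "('s::finite \<Rightarrow> 's \<Rightarrow> real) \<Rightarrow> nat \<Rightarrow> 's \<Rightarrow> 's \<Rightarrow> real" where
  "mpow M 0 s u = of_bool (u = s)"
| "mpow M (Suc t) s u = (\<Sum>v\<in>UNIV. mpow M t s v * M v u)"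

lemma mpow_Suc_apply:
  "(\<Sum>u\<in>UNIV. mpow M (Suc t) s u * f u) = (\<Sum>u\<in>UNIV. mpow M t s u * (\<Sum>v\<in>UNIV. M u v * f v))"
  by (simp add: sum_distrib_left sum_distrib_right mult.assoc) (rule sum.swap)

lemma mpow_Suc_left: "mpow M (Suc t) s u = (\<Sum>v\<in>UNIV. M s v * mpow M t v u)"
proof (induction t arbitrary: u)
  case 0
  show ?case by simp
next
  case (Suc t)
  then show ?case
    by (simp add: sum_distrib_left sum_distrib_right mult.assoc) (rule sum.swap)
qed

lemma mpow_nonneg: "(\<And>u v. 0 \<le> M u v) \<Longrightarrow> 0 \<le> mpow M t s u"
  by (induction t arbitrary: u) (auto intro!: sum_nonneg)

lemma mpow_row_sum_le: "substochastic M \<Longrightarrow> (\<Sum>u\<in>UNIV. mpow M t s u) \<le> 1"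
proof (induction t)
  case (Suc t)
  have "(\<Sum>u\<in>UNIV. mpow M (Suc t) s u) = (\<Sum>u\<in>UNIV. mpow M t s u * (\<Sum>v\<in>UNIV. M u v))"
    using mpow_Suc_apply[of M t s "\<lambda>_. 1"] by simp
  also have "\<dots> \<le> (\<Sum>u\<in>UNIV. mpow M t s u)"
    using Suc.prems
    by (intro sum_mono mult_left_le) (auto simp: substochastic_def intro: mpow_nonneg)
  finally show ?case using Suc by simp
qed simp

lemma mpow_mono:
  assumes "\<And>u v. 0 \<le> M u v" "\<And>u v. M u v \<le> M' u v"
  shows "mpow M t s u \<le> mpow M' t s u"
proof (induction t arbitrary: u)
  case (Suc t)
  have "\<And>u v. 0 \<le> M' u v" using assms order_trans by blast
  then show ?case
    using Suc assms by (auto intro!: sum_mono mult_mono mpow_nonneg)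
qed simp

lemma mpow_row_sum_mono:
  assumes "\<And>u v. 0 \<le> B u v" "\<And>u v. B u v \<le> B' u v"
  shows "(\<Sum>u\<in>UNIV. mpow B t s u) \<le> (\<Sum>u\<in>UNIV. mpow B' t s u)"
  using assms by (intro sum_mono mpow_mono)

lemma mpow_scale: "mpow (\<lambda>u v. c * M u v) t s u = c ^ t * mpow M t s u"
  by (induction t arbitrary: u) (auto simp: sum_distrib_left mult_ac)

lemma mpow_pos_Suc_left:
  assumes "\<And>u v. 0 \<le> M u v" "0 < M s v" "0 < mpow M t v u"
  shows "0 < mpow M (Suc t) s u"
proof -
  have "M s v * mpow M t v u \<le> (\<Sum>w\<in>UNIV. M s w * mpow M t w u)"
    using assms(1) by (intro member_le_sum) (auto intro!: mult_nonneg_nonneg mpow_nonneg)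
  then show ?thesis
    unfolding mpow_Suc_left using mult_pos_pos[OF assms(2,3)] by linarith
qed

lemma mpow_pos_SucE:
  assumes "\<And>u v. 0 \<le> M u v" "0 < mpow M (Suc t) s u"
  obtains v where "0 < mpow M t s v" "0 < M v u"
proof -
  have "0 < (\<Sum>v\<in>UNIV. mpow M t s v * M v u)"
    using assms(2) by simp
  then obtain v where "0 < mpow M t s v * M v u"
    by (meson not_le sum_nonpos)
  moreover have "0 \<le> mpow M t s v" "0 \<le> M v u"
    using assms(1) by (auto intro: mpow_nonneg)
  ultimately show ?thesis
    using that by (auto simp: zero_less_mult_iff)
qed

lemma mpow_pos_of_scaled_le:
  assumes "\<And>u v. 0 \<le> M u v" "0 < c" "\<And>u v. c * M u v \<le> M' u v" "0 < mpow M t s u"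
  shows "0 < mpow M' t s u"
proof -
  have "c ^ t * mpow M t s u \<le> mpow M' t s u"
    using mpow_mono[of "\<lambda>u v. c * M u v" M'] assms(1-3) by (simp add: mpow_scale)
  moreover have "0 < c ^ t * mpow M t s u"
    using assms(2,4) by simp
  ultimately show ?thesis
    by linarith
qed

section \<open>Discounted sums along matrix powers\<close>

lemma abs_sum_weighted_le:
  fixes w g c :: "'s \<Rightarrow> real"
  assumes "\<And>u. 0 \<le> w u" "\<And>u. \<bar>g u\<bar> \<le> c u"
  shows "\<bar>\<Sum>u\<in>S. w u * g u\<bar> \<le> (\<Sum>u\<in>S. w u * c u)"
  using assms by (intro sum_abs[THEN order_trans] sum_mono) (simp add: abs_mult mult_left_mono)

lemma abs_weighted_sum_le:
  fixes w g :: "'s::finite \<Rightarrow> real"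
  assumes "\<And>u. 0 \<le> w u" "(\<Sum>u\<in>UNIV. w u) \<le> 1" "\<And>u. \<bar>g u\<bar> \<le> C"
  shows "\<bar>\<Sum>u\<in>UNIV. w u * g u\<bar> \<le> C"
proof -
  have "0 \<le> C" using assms(3) abs_ge_zero order_trans by blast
  have "\<bar>\<Sum>u\<in>UNIV. w u * g u\<bar> \<le> (\<Sum>u\<in>UNIV. w u * C)"
    using assms(1,3) by (rule abs_sum_weighted_le)
  also have "\<dots> \<le> C"
    using mult_right_mono[OF assms(2) \<open>0 \<le> C\<close>] by (simp add: sum_distrib_right)
  finally show ?thesis .
qed

lemma summable_discounted_bounded:
  fixes f :: "nat \<Rightarrow> real"
  assumes "\<And>t. \<bar>f t\<bar> \<le> C" "0 \<le> \<gamma>" "\<gamma> < 1"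
  shows "summable (\<lambda>t. \<gamma> ^ t * f t)"
proof (rule summable_comparison_test)
  have "\<bar>f t\<bar> * \<gamma> ^ t \<le> C * \<gamma> ^ t" for t
    using assms by (simp add: mult_right_mono)
  then show "\<exists>N. \<forall>t\<ge>N. norm (\<gamma> ^ t * f t) \<le> C * \<gamma> ^ t"
    using assms by (auto simp: abs_mult mult.commute)
  show "summable (\<lambda>t. C * \<gamma> ^ t)"
    using assms by (intro summable_mult summable_geometric) auto
qed

lemma summable_discounted_mpow:
  assumes "substochastic M" "0 \<le> \<gamma>" "\<gamma> < 1"
  shows "summable (\<lambda>t. \<gamma> ^ t * (\<Sum>u\<in>UNIV. mpow M t s u * g u))"
proof (rule summable_discounted_bounded[OF _ assms(2,3)])
  have "\<bar>g u\<bar> \<le> (\<Sum>v\<in>UNIV. \<bar>g v\<bar>)" for u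
    by (rule member_le_sum) auto
  then show "\<bar>\<Sum>u\<in>UNIV. mpow M t s u * g u\<bar> \<le> (\<Sum>v\<in>UNIV. \<bar>g v\<bar>)" for t
    using assms(1) by (intro abs_weighted_sum_le mpow_row_sum_le mpow_nonneg)
      (auto simp: substochastic_def)
qed

lemma suminf_strict_mono:
  fixes f g :: "nat \<Rightarrow> real"
  assumes "summable f" "summable g" "\<And>n. f n \<le> g n" "f i < g i"
  shows "suminf f < suminf g"
proof -
  have "0 < (\<Sum>n. g n - f n)"
    using assms by (intro suminf_pos2[where i=i] summable_diff) auto
  then show ?thesis
    using suminf_diff[OF assms(2,1)] by simp
qed

definition discounted_value :: "('s::finite \<Rightarrow> 's \<Rightarrow> real) \<Rightarrow> ('s \<Rightarrow> real) \<Rightarrow> real \<Rightarrow> 's \<Rightarrow> real" where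
  "discounted_value M \<rho> \<gamma> s = (\<Sum>t. \<gamma> ^ t * (\<Sum>u\<in>UNIV. mpow M t s u * \<rho> u))"

lemma discounted_value_bellman:
  assumes M: "substochastic M" and \<gamma>: "0 \<le> \<gamma>" "\<gamma> < 1"
  shows "discounted_value M \<rho> \<gamma> s = \<rho> s + \<gamma> * (\<Sum>v\<in>UNIV. M s v * discounted_value M \<rho> \<gamma> v)"
proof -
  define G where "G t s = (\<Sum>u\<in>UNIV. mpow M t s u * \<rho> u)" for t s
  have sG: "summable (\<lambda>t. \<gamma> ^ t * G t s)" for s
    unfolding G_def using M \<gamma> by (rule summable_discounted_mpow)
  have GSuc: "G (Suc t) s = (\<Sum>v\<in>UNIV. M s v * G t v)" for t
    unfolding G_def mpow_Suc_left
    by (simp add: sum_distrib_left sum_distrib_right mult.assoc del: mpow.simps(2)) (rule sum.swap)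
  have "discounted_value M \<rho> \<gamma> s - \<rho> s = (\<Sum>t. \<gamma> ^ Suc t * G (Suc t) s)"
    using suminf_split_head[OF sG[of s]] by (simp add: discounted_value_def G_def)
  also have "\<dots> = (\<Sum>t. \<Sum>v\<in>UNIV. \<gamma> * M s v * (\<gamma> ^ t * G t v))"
    unfolding GSuc by (simp add: sum_distrib_left mult_ac)
  also have "\<dots> = (\<Sum>v\<in>UNIV. \<Sum>t. \<gamma> * M s v * (\<gamma> ^ t * G t v))"
    by (intro suminf_sum summable_mult sG)
  also have "\<dots> = (\<Sum>v\<in>UNIV. \<gamma> * M s v * (\<Sum>t. \<gamma> ^ t * G t v))"
    by (intro sum.cong refl suminf_mult sG)
  also have "\<dots> = \<gamma> * (\<Sum>v\<in>UNIV. M s v * discounted_value M \<rho> \<gamma> v)"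
    by (simp add: discounted_value_def G_def sum_distrib_left mult.assoc)
  finally show ?thesis by simp
qed

definition discounted_mass :: "('s::finite \<Rightarrow> 's \<Rightarrow> real) \<Rightarrow> real \<Rightarrow> 's \<Rightarrow> real" where
  "discounted_mass B \<gamma> s = (\<Sum>t. \<gamma> ^ t * (\<Sum>u\<in>UNIV. mpow B t s u))"

lemma summable_discounted_mass:
  "substochastic B \<Longrightarrow> 0 \<le> \<gamma> \<Longrightarrow> \<gamma> < 1 \<Longrightarrow> summable (\<lambda>t. \<gamma> ^ t * (\<Sum>u\<in>UNIV. mpow B t s u))"
  using summable_discounted_mpow[where g="\<lambda>_. 1"] by simp

lemma one_le_discounted_mass:
  assumes B: "substochastic B" and \<gamma>: "0 \<le> \<gamma>" "\<gamma> < 1"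
  shows "1 \<le> discounted_mass B \<gamma> s"
proof -
  have "(\<Sum>t\<in>{0}. \<gamma> ^ t * (\<Sum>u\<in>UNIV. mpow B t s u)) \<le> discounted_mass B \<gamma> s"
    unfolding discounted_mass_def using B \<gamma>
    by (intro sum_le_suminf summable_discounted_mass)
      (auto intro!: mult_nonneg_nonneg sum_nonneg mpow_nonneg simp: substochastic_def)
  then show ?thesis by simp
qed

lemma discounted_mass_mono:
  assumes B': "substochastic B'" and B: "\<And>u v. 0 \<le> B u v" "\<And>u v. B u v \<le> B' u v"
    and \<gamma>: "0 \<le> \<gamma>" "\<gamma> < 1"
  shows "discounted_mass B \<gamma> s \<le> discounted_mass B' \<gamma> s"
proof -
  have "substochastic B"
    using B' B by (rule substochastic_le)
  then show ?thesis
    unfolding discounted_mass_def using B' B \<gamma>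
    by (intro suminf_le mult_left_mono mpow_row_sum_mono summable_discounted_mass) auto
qed

lemma discounted_mass_strict_mono:
  assumes B': "substochastic B'" and B: "\<And>u v. 0 \<le> B u v" "\<And>u v. B u v \<le> B' u v"
    and \<gamma>: "0 < \<gamma>" "\<gamma> < 1"
    and reach: "0 < mpow B' t s u" and loss: "(\<Sum>v\<in>UNIV. B u v) < (\<Sum>v\<in>UNIV. B' u v)"
  shows "discounted_mass B \<gamma> s < discounted_mass B' \<gamma> s"
proof -
  have sB: "substochastic B"
    using B' B by (rule substochastic_le)
  have B'0: "\<And>u v. 0 \<le> B' u v" using B' by (simp add: substochastic_def)
  have "(\<Sum>w\<in>UNIV. mpow B (Suc t) s w)
      = (\<Sum>w\<in>UNIV. mpow B t s w * (\<Sum>v\<in>UNIV. B w v))"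
    using mpow_Suc_apply[of B t s "\<lambda>_. 1"] by (simp del: mpow.simps(2))
  also have "\<dots> \<le> (\<Sum>w\<in>UNIV. mpow B' t s w * (\<Sum>v\<in>UNIV. B w v))"
    using B by (intro sum_mono mult_right_mono mpow_mono sum_nonneg) auto
  also have "\<dots> < (\<Sum>w\<in>UNIV. mpow B' t s w * (\<Sum>v\<in>UNIV. B' w v))"
  proof (rule sum_strict_mono_ex1)
    show "\<forall>w\<in>UNIV. mpow B' t s w * (\<Sum>v\<in>UNIV. B w v) \<le> mpow B' t s w * (\<Sum>v\<in>UNIV. B' w v)"
      using B B'0 by (auto intro!: mult_left_mono sum_mono mpow_nonneg)
    show "\<exists>w\<in>UNIV. mpow B' t s w * (\<Sum>v\<in>UNIV. B w v) < mpow B' t s w * (\<Sum>v\<in>UNIV. B' w v)"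
      using reach loss by (auto intro!: mult_strict_left_mono)
  qed simp
  also have "\<dots> = (\<Sum>w\<in>UNIV. mpow B' (Suc t) s w)"
    using mpow_Suc_apply[of B' t s "\<lambda>_. 1"] by (simp del: mpow.simps(2))
  finally have "(\<Sum>w\<in>UNIV. mpow B (Suc t) s w) < (\<Sum>w\<in>UNIV. mpow B' (Suc t) s w)" .
  then show ?thesis
    unfolding discounted_mass_def using sB B' B \<gamma>
    by (intro suminf_strict_mono[where i="Suc t"] summable_discounted_mass mult_left_mono
        mult_strict_left_mono mpow_row_sum_mono) auto
qed

section \<open>The Retrace operator on a finite space\<close>

(* A is the transition matrix of the target policy, B <= A the traced one: mpow B t s u is the
  expected product of traces along the paths from s to u of length t. *)
definition retrace_op :: "('s::finite \<Rightarrow> 's \<Rightarrow> real) \<Rightarrow> ('s \<Rightarrow> 's \<Rightarrow> real) \<Rightarrow> real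
    \<Rightarrow> ('s \<Rightarrow> real) \<Rightarrow> ('s \<Rightarrow> real) \<Rightarrow> 's \<Rightarrow> real" where
  "retrace_op A B \<gamma> \<rho> Q s = Q s + (\<Sum>t. \<gamma> ^ t * (\<Sum>u\<in>UNIV. mpow B t s u *
      (\<rho> u + \<gamma> * (\<Sum>v\<in>UNIV. A u v * Q v) - Q u)))"

lemma retrace_op_fixed_point:
  assumes "\<And>u. Q u = \<rho> u + \<gamma> * (\<Sum>v\<in>UNIV. A u v * Q v)"
  shows "retrace_op A B \<gamma> \<rho> Q = Q"
proof -
  have "\<rho> u + \<gamma> * (\<Sum>v\<in>UNIV. A u v * Q v) - Q u = 0" for u
    using assms[of u] by linarith
  then show ?thesis
    by (simp add: retrace_op_def fun_eq_iff)
qed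

(* The B-part of gamma A (Q - Q') is the next term of the series, which therefore telescopes. *)
lemma retrace_op_term_diff:
  "\<gamma> ^ t * (\<Sum>u\<in>UNIV. mpow B t s u * (\<rho> u + \<gamma> * (\<Sum>v\<in>UNIV. A u v * Q v) - Q u))
    - \<gamma> ^ t * (\<Sum>u\<in>UNIV. mpow B t s u * (\<rho> u + \<gamma> * (\<Sum>v\<in>UNIV. A u v * Q' v) - Q' u))
  = (\<gamma> ^ Suc t * (\<Sum>u\<in>UNIV. mpow B (Suc t) s u * (Q u - Q' u))
      - \<gamma> ^ t * (\<Sum>u\<in>UNIV. mpow B t s u * (Q u - Q' u)))
    + \<gamma> ^ Suc t * (\<Sum>u\<in>UNIV. mpow B t s u * (\<Sum>v\<in>UNIV. (A u v - B u v) * (Q v - Q' v)))"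
proof -
  have split: "(\<Sum>v\<in>UNIV. A u v * Q v) - (\<Sum>v\<in>UNIV. A u v * Q' v)
      = (\<Sum>v\<in>UNIV. B u v * (Q v - Q' v)) + (\<Sum>v\<in>UNIV. (A u v - B u v) * (Q v - Q' v))" for u
    by (simp add: algebra_simps flip: sum_subtractf sum.distrib)
  have "(\<rho> u + \<gamma> * (\<Sum>v\<in>UNIV. A u v * Q v) - Q u) - (\<rho> u + \<gamma> * (\<Sum>v\<in>UNIV. A u v * Q' v) - Q' u)
      = \<gamma> * ((\<Sum>v\<in>UNIV. A u v * Q v) - (\<Sum>v\<in>UNIV. A u v * Q' v)) - (Q u - Q' u)" for u
    by (simp add: algebra_simps)
  then have "(\<rho> u + \<gamma> * (\<Sum>v\<in>UNIV. A u v * Q v) - Q u) - (\<rho> u + \<gamma> * (\<Sum>v\<in>UNIV. A u v * Q' v) - Q' u)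
      = \<gamma> * (\<Sum>v\<in>UNIV. B u v * (Q v - Q' v)) + \<gamma> * (\<Sum>v\<in>UNIV. (A u v - B u v) * (Q v - Q' v))
        - (Q u - Q' u)" for u
    unfolding split by (simp add: distrib_left)
  then show ?thesis
    unfolding mpow_Suc_apply
    by (simp add: algebra_simps sum.distrib sum_subtractf sum_distrib_left del: mpow.simps(2)
        flip: right_diff_distrib)
qed

lemma retrace_op_diff:
  assumes B: "substochastic B" and \<gamma>: "0 \<le> \<gamma>" "\<gamma> < 1"
  shows "retrace_op A B \<gamma> \<rho> Q s - retrace_op A B \<gamma> \<rho> Q' s =
    (\<Sum>t. \<gamma> ^ Suc t * (\<Sum>u\<in>UNIV. mpow B t s u * (\<Sum>v\<in>UNIV. (A u v - B u v) * (Q v - Q' v))))"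
    (is "_ = suminf ?e")
proof -
  define h where "h t = \<gamma> ^ t * (\<Sum>u\<in>UNIV. mpow B t s u * (Q u - Q' u))" for t
  define X where "X R t = \<gamma> ^ t * (\<Sum>u\<in>UNIV. mpow B t s u *
      (\<rho> u + \<gamma> * (\<Sum>v\<in>UNIV. A u v * R v) - R u))" for R t
  note summable = summable_discounted_mpow[OF assms]
  have "h \<longlonglongrightarrow> 0"
    unfolding h_def by (rule summable_LIMSEQ_zero[OF summable])
  from telescope_sums[OF this] have "(\<lambda>t. h (Suc t) - h t) sums (- (Q s - Q' s))"
    by (simp add: h_def)
  moreover have "summable ?e"
    unfolding power_Suc mult.assoc by (rule summable_mult[OF summable])
  ultimately have "(\<lambda>t. X Q t - X Q' t) sums (- (Q s - Q' s) + suminf ?e)"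
    unfolding X_def h_def retrace_op_term_diff by (intro sums_add summable_sums)
  moreover have "(\<lambda>t. X Q t - X Q' t)
      sums (retrace_op A B \<gamma> \<rho> Q s - retrace_op A B \<gamma> \<rho> Q' s - (Q s - Q' s))"
    unfolding retrace_op_def X_def by (simp add: sums_diff summable summable_sums)
  ultimately show ?thesis
    using sums_unique2 by fastforce
qed

(* For stochastic A this is sum_t gamma^(t+1) (B^t (A - B) 1)(s) (retrace_coeff_series); the
  closed form makes its antitonicity in B evident. *)
definition retrace_coeff :: "('s::finite \<Rightarrow> 's \<Rightarrow> real) \<Rightarrow> real \<Rightarrow> 's \<Rightarrow> real" where
  "retrace_coeff B \<gamma> s = 1 - (1 - \<gamma>) * discounted_mass B \<gamma> s"

lemma retrace_coeff_series:
  assumes A: "\<And>u. (\<Sum>v\<in>UNIV. A u v) = 1" and B: "substochastic B" and \<gamma>: "0 \<le> \<gamma>" "\<gamma> < 1"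
  shows "(\<Sum>t. \<gamma> ^ Suc t * (\<Sum>u\<in>UNIV. mpow B t s u * (\<Sum>v\<in>UNIV. A u v - B u v)))
    = retrace_coeff B \<gamma> s"
proof -
  define w where "w t = (\<Sum>u\<in>UNIV. mpow B t s u)" for t
  have sw: "summable (\<lambda>t. \<gamma> ^ t * w t)"
    unfolding w_def using B \<gamma> by (rule summable_discounted_mass)
  have "(\<Sum>u\<in>UNIV. mpow B t s u * (\<Sum>v\<in>UNIV. A u v - B u v)) = w t - w (Suc t)" for t
    using mpow_Suc_apply[of B t s "\<lambda>_. 1"]
    by (simp add: w_def sum_subtractf A right_diff_distrib sum.distrib del: mpow.simps(2))
  then have "(\<Sum>t. \<gamma> ^ Suc t * (\<Sum>u\<in>UNIV. mpow B t s u * (\<Sum>v\<in>UNIV. A u v - B u v)))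
      = (\<Sum>t. \<gamma> * (\<gamma> ^ t * w t) - \<gamma> ^ Suc t * w (Suc t))"
    by (simp add: right_diff_distrib mult.assoc)
  also have "\<dots> = \<gamma> * (\<Sum>t. \<gamma> ^ t * w t) - (\<Sum>t. \<gamma> ^ Suc t * w (Suc t))"
  proof -
    have "summable (\<lambda>t. \<gamma> ^ Suc t * w (Suc t))"
      using sw summable_Suc_iff[of "\<lambda>t. \<gamma> ^ t * w t"] by (simp del: power_Suc)
    from suminf_diff[OF summable_mult[OF sw, of \<gamma>] this] show ?thesis
      using suminf_mult[OF sw, of \<gamma>] by (simp del: power_Suc)
  qed
  also have "(\<Sum>t. \<gamma> ^ Suc t * w (Suc t)) = (\<Sum>t. \<gamma> ^ t * w t) - 1"
    using suminf_split_head[OF sw] by (simp add: w_def)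
  finally show ?thesis
    unfolding retrace_coeff_def discounted_mass_def w_def by (simp add: algebra_simps)
qed

lemma retrace_coeff_nonneg:
  assumes A: "stochastic A" and B: "\<And>u v. 0 \<le> B u v" "\<And>u v. B u v \<le> A u v"
    and \<gamma>: "0 \<le> \<gamma>" "\<gamma> < 1"
  shows "0 \<le> retrace_coeff B \<gamma> s"
proof -
  have sB: "substochastic B" using A B by (rule substochastic_le_stochastic)
  have "0 \<le> (\<Sum>t. \<gamma> ^ Suc t * (\<Sum>u\<in>UNIV. mpow B t s u * (\<Sum>v\<in>UNIV. A u v - B u v)))"
    using summable_mult[OF summable_discounted_mpow[OF sB \<gamma>], of \<gamma>] B \<gamma>
    by (intro suminf_nonneg) (auto simp: mult.assoc intro!: mult_nonneg_nonneg sum_nonneg mpow_nonneg)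
  moreover have "\<And>u. (\<Sum>v\<in>UNIV. A u v) = 1"
    using A by (simp add: stochastic_def)
  ultimately show ?thesis
    using retrace_coeff_series[OF _ sB \<gamma>] by (simp del: power_Suc)
qed

lemma retrace_coeff_le:
  assumes "substochastic B" "0 \<le> \<gamma>" "\<gamma> < 1"
  shows "retrace_coeff B \<gamma> s \<le> \<gamma>"
proof -
  have "(1 - \<gamma>) * 1 \<le> (1 - \<gamma>) * discounted_mass B \<gamma> s"
    using assms one_le_discounted_mass by (intro mult_left_mono) auto
  then show ?thesis
    by (simp add: retrace_coeff_def algebra_simps)
qed

lemma retrace_coeff_antimono:
  assumes "substochastic B'" "\<And>u v. 0 \<le> B u v" "\<And>u v. B u v \<le> B' u v" "0 \<le> \<gamma>" "\<gamma> < 1"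
  shows "retrace_coeff B' \<gamma> s \<le> retrace_coeff B \<gamma> s"
  using discounted_mass_mono[OF assms, of s] assms(5)
  by (simp add: retrace_coeff_def mult_left_mono)

lemma retrace_coeff_strict_antimono:
  assumes "substochastic B'" "\<And>u v. 0 \<le> B u v" "\<And>u v. B u v \<le> B' u v" "0 < \<gamma>" "\<gamma> < 1"
    and "0 < mpow B' t s u" "(\<Sum>v\<in>UNIV. B u v) < (\<Sum>v\<in>UNIV. B' u v)"
  shows "retrace_coeff B' \<gamma> s < retrace_coeff B \<gamma> s"
  using discounted_mass_strict_mono[OF assms] assms(5)
  by (simp add: retrace_coeff_def)

lemma retrace_op_dist_le:
  assumes A: "stochastic A" and B: "\<And>u v. 0 \<le> B u v" "\<And>u v. B u v \<le> A u v"
    and \<gamma>: "0 \<le> \<gamma>" "\<gamma> < 1" and d: "\<And>v. \<bar>Q v - Q' v\<bar> \<le> d"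
  shows "\<bar>retrace_op A B \<gamma> \<rho> Q s - retrace_op A B \<gamma> \<rho> Q' s\<bar> \<le> retrace_coeff B \<gamma> s * d"
proof -
  have sB: "substochastic B" using A B by (rule substochastic_le_stochastic)
  define f where "f = (\<lambda>t. \<gamma> ^ Suc t *
    (\<Sum>u\<in>UNIV. mpow B t s u * (\<Sum>v\<in>UNIV. (A u v - B u v) * (Q v - Q' v))))"
  define g where "g = (\<lambda>t. \<gamma> ^ Suc t * (\<Sum>u\<in>UNIV. mpow B t s u * (\<Sum>v\<in>UNIV. A u v - B u v)))"
  have sg: "summable g"
    unfolding g_def power_Suc mult.assoc by (rule summable_mult[OF summable_discounted_mpow[OF sB \<gamma>]])
  have "\<bar>\<Sum>v\<in>UNIV. (A u v - B u v) * (Q v - Q' v)\<bar> \<le> (\<Sum>v\<in>UNIV. A u v - B u v) * d" for u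
    using abs_sum_weighted_le[of "\<lambda>v. A u v - B u v" "\<lambda>v. Q v - Q' v" "\<lambda>_. d"] B d
    by (simp add: sum_distrib_right)
  then have "\<bar>\<Sum>u\<in>UNIV. mpow B t s u * (\<Sum>v\<in>UNIV. (A u v - B u v) * (Q v - Q' v))\<bar>
      \<le> (\<Sum>u\<in>UNIV. mpow B t s u * (\<Sum>v\<in>UNIV. A u v - B u v)) * d" for t
    using abs_sum_weighted_le[of "mpow B t s"] B by (simp add: mpow_nonneg sum_distrib_right mult.assoc)
  then have fg: "\<bar>f t\<bar> \<le> g t * d" for t
    using \<gamma> by (simp add: f_def g_def abs_mult mult.assoc mult_left_mono)
  then have "summable (\<lambda>t. \<bar>f t\<bar>)"
    using sg by (intro summable_rabs_comparison_test[where g="\<lambda>t. g t * d"] summable_mult2) auto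
  then have "\<bar>\<Sum>t. f t\<bar> \<le> (\<Sum>t. g t * d)"
    using fg sg by (intro summable_rabs[THEN order_trans] suminf_le summable_mult2) auto
  then show ?thesis
    using retrace_op_diff[OF sB \<gamma>] retrace_coeff_series[OF _ sB \<gamma>] A suminf_mult2[OF sg, of d]
    by (simp add: f_def g_def stochastic_def)
qed

lemma retrace_op_const_diff:
  assumes "stochastic A" "substochastic B" "0 \<le> \<gamma>" "\<gamma> < 1"
  shows "retrace_op A B \<gamma> \<rho> (\<lambda>_. 1) s - retrace_op A B \<gamma> \<rho> (\<lambda>_. 0) s = retrace_coeff B \<gamma> s"
  using assms retrace_op_diff[OF assms(2-4)] retrace_coeff_series[OF _ assms(2-4)]
  by (simp add: stochastic_def)

section \<open>Supremum norm and contraction rate\<close>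

lemma supnorm_eq_Max_range: "supnorm Q = Max (range (\<lambda>(x, a). \<bar>Q x a\<bar>))"
proof -
  have "{\<bar>Q x a\<bar> | x a. True} = range (\<lambda>(x, a). \<bar>Q x a\<bar>)"
    by auto
  then show ?thesis by (simp add: supnorm_def)
qed

lemma abs_le_supnorm: "\<bar>Q x a\<bar> \<le> supnorm Q"
  unfolding supnorm_eq_Max_range by (rule Max_ge) (auto intro: image_eqI[of _ _ "(x, a)"])

lemma supnorm_le: "(\<And>x a. \<bar>Q x a\<bar> \<le> c) \<Longrightarrow> supnorm Q \<le> c"
  unfolding supnorm_eq_Max_range by (rule Max.boundedI) auto

lemma supnorm_attained: "\<exists>x a. supnorm Q = \<bar>Q x a\<bar>"
proof -
  have "supnorm Q \<in> range (\<lambda>(x, a). \<bar>Q x a\<bar>)"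
    unfolding supnorm_eq_Max_range by (rule Max_in) auto
  then show ?thesis by auto
qed

lemma supnorm_nonneg: "0 \<le> supnorm Q"
  using abs_le_supnorm[of Q] abs_ge_zero order_trans by blast

lemma supnorm_pos:
  assumes "Q \<noteq> (\<lambda>x a. 0)"
  shows "0 < supnorm Q"
proof -
  obtain x a where "Q x a \<noteq> 0"
    using assms by blast
  then show ?thesis
    using abs_le_supnorm[of Q x a] by simp
qed

lemma supnorm_const_1: "supnorm (\<lambda>x a. 1) = 1"
  using supnorm_attained[of "\<lambda>x a. 1"] by auto

lemma supnorm_mono:
  assumes "\<And>x a. 0 \<le> k x a" "\<And>x a. k x a \<le> k' x a"
  shows "supnorm k \<le> supnorm k'"
proof (rule supnorm_le)
  fix x a
  show "\<bar>k x a\<bar> \<le> supnorm k'"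
    using assms[of x a] abs_le_supnorm[of k' x a] by simp
qed

lemma supnorm_strict_mono:
  assumes "\<And>x a. 0 \<le> k x a" "\<And>x a. k x a < k' x a"
  shows "supnorm k < supnorm k'"
proof -
  obtain x a where "supnorm k = \<bar>k x a\<bar>"
    using supnorm_attained by blast
  then show ?thesis
    using assms[of x a] abs_le_supnorm[of k' x a] by simp
qed

lemma contraction_rate_eqI:
  fixes T :: "('x::finite \<Rightarrow> 'a::finite \<Rightarrow> real) \<Rightarrow> 'x \<Rightarrow> 'a \<Rightarrow> real"
  assumes lipschitz: "\<And>Q Q' x a. \<bar>T Q x a - T Q' x a\<bar> \<le> k x a * supnorm (\<lambda>x a. Q x a - Q' x a)"
    and attained: "\<And>x a. T (\<lambda>_ _. 1) x a - T (\<lambda>_ _. 0) x a = k x a"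
    and k_nonneg: "\<And>x a. 0 \<le> k x a"
  shows "contraction_rate T = supnorm k"
  unfolding contraction_rate_def
proof (rule cSup_eq_maximum)
  have "supnorm k = supnorm (\<lambda>x a. T (\<lambda>_ _. 1) x a - T (\<lambda>_ _. 0) x a)
      / supnorm (\<lambda>x a. (\<lambda>_ _. 1::real) x a - (\<lambda>_ _. 0) x a)"
    by (simp add: attained supnorm_const_1)
  moreover have "(\<lambda>_ _. 1::real) \<noteq> (\<lambda>(_::'x) (_::'a). 0)"
    by (simp add: fun_eq_iff)
  ultimately show "supnorm k \<in> {supnorm (\<lambda>x a. T Q x a - T Q' x a) / supnorm (\<lambda>x a. Q x a - Q' x a)
      | Q Q'. Q \<noteq> Q'}"
    by blast
next
  fix z
  assume "z \<in> {supnorm (\<lambda>x a. T Q x a - T Q' x a) / supnorm (\<lambda>x a. Q x a - Q' x a) | Q Q'. Q \<noteq> Q'}"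
  then obtain Q Q' where "Q \<noteq> Q'"
    and z: "z = supnorm (\<lambda>x a. T Q x a - T Q' x a) / supnorm (\<lambda>x a. Q x a - Q' x a)"
    by blast
  then have pos: "0 < supnorm (\<lambda>x a. Q x a - Q' x a)"
    by (intro supnorm_pos) (auto simp: fun_eq_iff)
  have "\<bar>T Q x a - T Q' x a\<bar> \<le> supnorm k * supnorm (\<lambda>x a. Q x a - Q' x a)" for x a
  proof -
    have "k x a * supnorm (\<lambda>x a. Q x a - Q' x a) \<le> supnorm k * supnorm (\<lambda>x a. Q x a - Q' x a)"
      using abs_le_supnorm[of k x a] k_nonneg[of x a] pos by (intro mult_right_mono) auto
    then show ?thesis
      using lipschitz[of Q x a Q'] by linarith
  qed
  then have "supnorm (\<lambda>x a. T Q x a - T Q' x a) \<le> supnorm k * supnorm (\<lambda>x a. Q x a - Q' x a)"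
    by (rule supnorm_le)
  then show "z \<le> supnorm k"
    unfolding z using pos by (simp add: pos_divide_le_eq)
qed

lemma fixed_point_eqI:
  fixes T :: "('x::finite \<Rightarrow> 'a::finite \<Rightarrow> real) \<Rightarrow> 'x \<Rightarrow> 'a \<Rightarrow> real"
  assumes fixed: "T Q = Q" and c: "c < 1"
    and lipschitz: "\<And>Q Q' x a. \<bar>T Q x a - T Q' x a\<bar> \<le> c * supnorm (\<lambda>x a. Q x a - Q' x a)"
  shows "fixed_point T = Q"
  unfolding fixed_point_def
proof (rule the_equality)
  fix Q' assume "T Q' = Q'"
  then have "\<bar>Q' x a - Q x a\<bar> \<le> c * supnorm (\<lambda>x a. Q' x a - Q x a)" for x a
    using lipschitz[of Q' x a Q] fixed by simp
  then have "supnorm (\<lambda>x a. Q' x a - Q x a) \<le> c * supnorm (\<lambda>x a. Q' x a - Q x a)"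
    by (rule supnorm_le)
  moreover have "c * supnorm (\<lambda>x a. Q' x a - Q x a) < supnorm (\<lambda>x a. Q' x a - Q x a)"
    if "0 < supnorm (\<lambda>x a. Q' x a - Q x a)"
    using c mult_strict_right_mono[OF c that] by simp
  ultimately have "\<not> 0 < supnorm (\<lambda>x a. Q' x a - Q x a)"
    by linarith
  then have "(\<lambda>x a. Q' x a - Q x a) = (\<lambda>x a. 0)"
    using supnorm_pos by blast
  then show "Q' = Q"
    by (simp add: fun_eq_iff)
qed (rule fixed)

section \<open>Retrace on state-action pairs\<close>

definition sa_kernel :: "('x::finite \<Rightarrow> 'a::finite \<Rightarrow> 'x \<Rightarrow> real) \<Rightarrow> ('x \<Rightarrow> 'a \<Rightarrow> real)
    \<Rightarrow> 'x \<times> 'a \<Rightarrow> 'x \<times> 'a \<Rightarrow> real" where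
  "sa_kernel P \<nu> p q = P (fst p) (snd p) (fst q) * \<nu> (fst q) (snd q)"

lemma sa_kernel_Pair [simp]: "sa_kernel P \<nu> (x, a) (y, b) = P x a y * \<nu> y b"
  by (simp add: sa_kernel_def)

(* The kernel of trw, since mu * trace_c pi' mu = min mu pi' (mult_trace_c_eq_min). *)
abbreviation trace_kernel :: "('x::finite \<Rightarrow> 'a::finite \<Rightarrow> 'x \<Rightarrow> real) \<Rightarrow> ('x \<Rightarrow> 'a \<Rightarrow> real)
    \<Rightarrow> ('x \<Rightarrow> 'a \<Rightarrow> real) \<Rightarrow> 'x \<times> 'a \<Rightarrow> 'x \<times> 'a \<Rightarrow> real" where
  "trace_kernel P \<pi>' \<mu> \<equiv> sa_kernel P (\<lambda>y b. min (\<mu> y b) (\<pi>' y b))"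

lemma sum_UNIV_prod:
  "(\<Sum>y\<in>UNIV. \<Sum>b\<in>UNIV. f y b) = (\<Sum>q\<in>(UNIV::('x::finite \<times> 'a::finite) set). f (fst q) (snd q))"
  unfolding sum.cartesian_product UNIV_Times_UNIV by (simp add: case_prod_beta)

lemma occ_eq_mpow: "occ P \<nu> x a t y b = mpow (sa_kernel P \<nu>) t (x, a) (y, b)"
  by (induction t arbitrary: y b) (simp_all add: sum_UNIV_prod sa_kernel_def mult.assoc)

lemma trw_eq_mpow:
  "trw P \<pi>' \<mu> x a t y b = mpow (sa_kernel P (\<lambda>y b. \<mu> y b * trace_c \<pi>' \<mu> y b)) t (x, a) (y, b)"
  by (induction t arbitrary: y b) (simp_all add: sum_UNIV_prod sa_kernel_def mult.assoc)

lemma mult_trace_c_eq_min: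
  assumes "0 \<le> \<mu> y b" "0 \<le> \<pi>' y b"
  shows "\<mu> y b * trace_c \<pi>' \<mu> y b = min (\<mu> y b) (\<pi>' y b)"
proof (cases "\<mu> y b = 0")
  case False
  then have "0 < \<mu> y b" using assms by simp
  then show ?thesis
    by (simp add: trace_c_def min_def field_simps divide_le_eq)
qed (use assms in \<open>simp add: trace_c_def\<close>)

lemma sum_sa_kernel_mult:
  "(\<Sum>z\<in>UNIV. P y b z * (\<Sum>c\<in>UNIV. \<nu> z c * Q z c))
    = (\<Sum>q\<in>UNIV. sa_kernel P \<nu> (y, b) q * case_prod Q q)"
  by (simp add: sum_distrib_left sum_UNIV_prod sa_kernel_def case_prod_beta mult.assoc)

lemma retrace_eq_retrace_op:
  assumes "is_policy \<pi>'" "is_policy \<mu>"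
  shows "retrace P \<gamma> r \<pi>' \<mu> Q x a
    = retrace_op (sa_kernel P \<pi>') (trace_kernel P \<pi>' \<mu>) \<gamma> (case_prod r) (case_prod Q) (x, a)"
proof -
  have "(\<lambda>y b. \<mu> y b * trace_c \<pi>' \<mu> y b) = (\<lambda>y b. min (\<mu> y b) (\<pi>' y b))"
    using assms by (simp add: is_policy_def mult_trace_c_eq_min)
  then show ?thesis
    unfolding retrace_def retrace_op_def sum_sa_kernel_mult trw_eq_mpow
    by (simp add: sum_UNIV_prod case_prod_beta)
qed

lemma Qfun_eq_discounted_value:
  "Qfun P \<gamma> r \<nu> x a = discounted_value (sa_kernel P \<nu>) (case_prod r) \<gamma> (x, a)"
  unfolding Qfun_def discounted_value_def occ_eq_mpow by (simp add: sum_UNIV_prod case_prod_beta)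

lemma sa_kernel_nonneg: "is_kernel P \<Longrightarrow> (\<And>y b. 0 \<le> \<nu> y b) \<Longrightarrow> 0 \<le> sa_kernel P \<nu> p q"
  by (simp add: sa_kernel_def is_kernel_def)

lemma sa_kernel_mono:
  "is_kernel P \<Longrightarrow> (\<And>y b. \<nu> y b \<le> \<nu>' y b) \<Longrightarrow> sa_kernel P \<nu> p q \<le> sa_kernel P \<nu>' p q"
  by (simp add: sa_kernel_def is_kernel_def mult_left_mono)

lemma sa_kernel_row_sum:
  "(\<Sum>q\<in>UNIV. sa_kernel P \<nu> p q) = (\<Sum>z\<in>UNIV. P (fst p) (snd p) z * (\<Sum>c\<in>UNIV. \<nu> z c))"
  by (simp add: sa_kernel_def sum_distrib_left sum_UNIV_prod)

lemma sa_kernel_row_sum_strict_mono: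
  assumes K: "is_kernel P" and le: "\<And>y b. \<nu> y b \<le> \<nu>' y b"
    and "0 < P y b z" "\<nu> z c < \<nu>' z c"
  shows "(\<Sum>q\<in>UNIV. sa_kernel P \<nu> (y, b) q) < (\<Sum>q\<in>UNIV. sa_kernel P \<nu>' (y, b) q)"
  unfolding sa_kernel_row_sum fst_conv snd_conv
proof (rule sum_strict_mono_ex1)
  show "\<forall>z\<in>UNIV. P y b z * (\<Sum>c\<in>UNIV. \<nu> z c) \<le> P y b z * (\<Sum>c\<in>UNIV. \<nu>' z c)"
    using K le by (auto simp: is_kernel_def intro!: mult_left_mono sum_mono)
  have "(\<Sum>c\<in>UNIV. \<nu> z c) < (\<Sum>c\<in>UNIV. \<nu>' z c)"
    using le assms(4) by (intro sum_strict_mono_ex1) auto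
  then show "\<exists>z\<in>UNIV. P y b z * (\<Sum>c\<in>UNIV. \<nu> z c) < P y b z * (\<Sum>c\<in>UNIV. \<nu>' z c)"
    using assms(3) by (intro bexI[of _ z] mult_strict_left_mono) auto
qed simp

lemma stochastic_sa_kernel: "is_kernel P \<Longrightarrow> is_policy \<nu> \<Longrightarrow> stochastic (sa_kernel P \<nu>)"
  by (simp add: stochastic_def sa_kernel_row_sum sa_kernel_nonneg is_policy_def)
    (simp add: is_kernel_def)

lemma trace_kernel_le:
  assumes "is_kernel P" "is_policy \<pi>'" "is_policy \<mu>"
  shows "0 \<le> trace_kernel P \<pi>' \<mu> p q" "trace_kernel P \<pi>' \<mu> p q \<le> sa_kernel P \<pi>' p q"
  using assms by (auto simp: is_policy_def intro!: sa_kernel_nonneg sa_kernel_mono)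

lemma retrace_lipschitz:
  assumes K: "is_kernel P" and pol: "is_policy \<pi>'" "is_policy \<mu>" and \<gamma>: "0 \<le> \<gamma>" "\<gamma> < 1"
  shows "\<bar>retrace P \<gamma> r \<pi>' \<mu> Q x a - retrace P \<gamma> r \<pi>' \<mu> Q' x a\<bar>
    \<le> retrace_coeff (trace_kernel P \<pi>' \<mu>) \<gamma> (x, a) * supnorm (\<lambda>x a. Q x a - Q' x a)"
  unfolding retrace_eq_retrace_op[OF pol]
  using stochastic_sa_kernel[OF K pol(1)] trace_kernel_le[OF K pol] \<gamma>
  by (rule retrace_op_dist_le)
    (simp add: case_prod_beta abs_le_supnorm[of "\<lambda>x a. Q x a - Q' x a", simplified])

lemma contraction_rate_retrace:
  assumes K: "is_kernel P" and pol: "is_policy \<pi>'" "is_policy \<mu>" and \<gamma>: "0 \<le> \<gamma>" "\<gamma> < 1"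
  shows "contraction_rate (retrace P \<gamma> r \<pi>' \<mu>)
    = supnorm (\<lambda>x a. retrace_coeff (trace_kernel P \<pi>' \<mu>) \<gamma> (x, a))"
proof (rule contraction_rate_eqI)
  note A = stochastic_sa_kernel[OF K pol(1)] and B = trace_kernel_le[OF K pol]
  show "\<bar>retrace P \<gamma> r \<pi>' \<mu> Q x a - retrace P \<gamma> r \<pi>' \<mu> Q' x a\<bar>
      \<le> retrace_coeff (trace_kernel P \<pi>' \<mu>) \<gamma> (x, a) * supnorm (\<lambda>x a. Q x a - Q' x a)" for Q Q' x a
    using assms by (rule retrace_lipschitz)
  show "retrace P \<gamma> r \<pi>' \<mu> (\<lambda>_ _. 1) x a - retrace P \<gamma> r \<pi>' \<mu> (\<lambda>_ _. 0) x a
      = retrace_coeff (trace_kernel P \<pi>' \<mu>) \<gamma> (x, a)" for x a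
    unfolding retrace_eq_retrace_op[OF pol]
    using retrace_op_const_diff[OF A substochastic_le_stochastic[OF A B] \<gamma>]
    by (simp add: case_prod_unfold)
  show "0 \<le> retrace_coeff (trace_kernel P \<pi>' \<mu>) \<gamma> (x, a)" for x a
    using A B \<gamma> by (rule retrace_coeff_nonneg)
qed

lemma Qfun_bellman:
  assumes K: "is_kernel P" and pol: "is_policy \<nu>" and \<gamma>: "0 \<le> \<gamma>" "\<gamma> < 1"
  shows "Qfun P \<gamma> r \<nu> x a = r x a + \<gamma> * (\<Sum>z\<in>UNIV. P x a z * (\<Sum>c\<in>UNIV. \<nu> z c * Qfun P \<gamma> r \<nu> z c))"
proof -
  have "substochastic (sa_kernel P \<nu>)"
    using K pol by (intro stochastic_imp_substochastic stochastic_sa_kernel)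
  from discounted_value_bellman[OF this \<gamma>, of "case_prod r" "(x, a)"] show ?thesis
    unfolding sum_sa_kernel_mult by (simp add: Qfun_eq_discounted_value case_prod_beta)
qed

lemma fixed_point_retrace:
  assumes K: "is_kernel P" and pol: "is_policy \<pi>'" "is_policy \<mu>" and \<gamma>: "0 \<le> \<gamma>" "\<gamma> < 1"
  shows "fixed_point (retrace P \<gamma> r \<pi>' \<mu>) = Qfun P \<gamma> r \<pi>'"
proof (rule fixed_point_eqI)
  have "retrace_op (sa_kernel P \<pi>') (trace_kernel P \<pi>' \<mu>) \<gamma> (case_prod r) (case_prod (Qfun P \<gamma> r \<pi>'))
      = case_prod (Qfun P \<gamma> r \<pi>')"
  proof (rule retrace_op_fixed_point)
    fix u
    show "case_prod (Qfun P \<gamma> r \<pi>') u = case_prod r u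
        + \<gamma> * (\<Sum>v\<in>UNIV. sa_kernel P \<pi>' u v * case_prod (Qfun P \<gamma> r \<pi>') v)"
      using Qfun_bellman[OF K pol(1) \<gamma>, of r "fst u" "snd u"]
      by (simp add: sum_sa_kernel_mult case_prod_beta)
  qed
  then show "retrace P \<gamma> r \<pi>' \<mu> (Qfun P \<gamma> r \<pi>') = Qfun P \<gamma> r \<pi>'"
    by (simp add: fun_eq_iff retrace_eq_retrace_op[OF pol])
  show "\<bar>retrace P \<gamma> r \<pi>' \<mu> Q x a - retrace P \<gamma> r \<pi>' \<mu> Q' x a\<bar> \<le> \<gamma> * supnorm (\<lambda>x a. Q x a - Q' x a)"
    for Q Q' x a
  proof -
    have "retrace_coeff (trace_kernel P \<pi>' \<mu>) \<gamma> (x, a) \<le> \<gamma>"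
      using trace_kernel_le[OF K pol] stochastic_sa_kernel[OF K pol(1)] \<gamma>
      by (intro retrace_coeff_le substochastic_le_stochastic)
    then show ?thesis
      using retrace_lipschitz[OF assms, of r Q x a Q'] supnorm_nonneg[of "\<lambda>x a. Q x a - Q' x a"]
      by (meson mult_right_mono order_trans)
  qed
qed (use \<gamma> in simp)

(* The trace at time 0 is never cut, so distinguishability is used at a successor of (x, a):
  the state where pi and mu differ must be entered by a transition. *)
lemma distinguishable_reach:
  assumes K: "is_kernel P" and \<mu>: "is_policy \<mu>" and D: "\<forall>x a. distinguishable P \<pi> \<mu> x a"
  obtains t y b x' where "0 < mpow (sa_kernel P \<mu>) t (x, a) (y, b)" "0 < P y b x'" "\<pi> x' \<noteq> \<mu> x'"
proof -
  let ?M = "sa_kernel P \<mu>"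
  have M0: "0 \<le> ?M p q" for p q
    using K \<mu> by (intro sa_kernel_nonneg) (auto simp: is_policy_def)
  obtain y1 where y1: "0 < P x a y1"
    using K unfolding is_kernel_def by (metis not_le sum_nonpos zero_less_one)
  obtain b1 where b1: "0 < \<mu> y1 b1"
    using \<mu> unfolding is_policy_def by (metis not_le sum_nonpos zero_less_one)
  obtain t x' where "0 < (\<Sum>b\<in>UNIV. occ P \<mu> y1 b1 t x' b)" and x': "\<pi> x' \<noteq> \<mu> x'"
    using D unfolding distinguishable_def by blast
  then obtain b' where "0 < occ P \<mu> y1 b1 t x' b'"
    by (meson not_le sum_nonpos)
  then have "0 < mpow ?M (Suc t) (x, a) (x', b')"
    using y1 b1
    by (intro mpow_pos_Suc_left[OF M0, where v="(y1, b1)"]) (simp_all add: occ_eq_mpow)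
  then obtain v where v: "0 < mpow ?M t (x, a) v" and "0 < ?M v (x', b')"
    using M0 mpow_pos_SucE by blast
  then have "0 < P (fst v) (snd v) x'"
    using K \<mu> by (auto simp: sa_kernel_def zero_less_mult_iff is_kernel_def is_policy_def
        dest: leD[of 0 "P _ _ _"])
  then show ?thesis
    using that[of t "fst v" "snd v" x'] v x' by simp
qed

section \<open>Mixing the behaviour policy into the target\<close>

definition mix_policy :: "real \<Rightarrow> ('x \<Rightarrow> 'a \<Rightarrow> real) \<Rightarrow> ('x \<Rightarrow> 'a \<Rightarrow> real) \<Rightarrow> 'x \<Rightarrow> 'a \<Rightarrow> real" where
  "mix_policy \<alpha> \<pi> \<mu> = (\<lambda>x b. \<alpha> * \<pi> x b + (1 - \<alpha>) * \<mu> x b)"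

lemma alpha_retrace_eq_retrace:
  "alpha_retrace P \<gamma> r \<pi> \<mu> \<alpha> = retrace P \<gamma> r (mix_policy \<alpha> \<pi> \<mu>) \<mu>"
  by (simp add: alpha_retrace_def mix_policy_def)

lemma mix_policy_1 [simp]: "mix_policy 1 \<pi> \<mu> = \<pi>"
  by (simp add: mix_policy_def)

lemma is_policy_mix_policy:
  assumes "is_policy \<pi>" "is_policy \<mu>" "0 \<le> \<alpha>" "\<alpha> \<le> 1"
  shows "is_policy (mix_policy \<alpha> \<pi> \<mu>)"
  using assms unfolding is_policy_def mix_policy_def
  by (auto simp: sum.distrib simp flip: sum_distrib_left)

lemma is_policy_neq_imp_less:
  assumes "is_policy \<pi>" "is_policy \<mu>" "\<pi> x \<noteq> \<mu> x"
  obtains b where "\<pi> x b < \<mu> x b"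
proof -
  have "\<exists>b. \<pi> x b < \<mu> x b"
  proof (rule ccontr)
    assume "\<nexists>b. \<pi> x b < \<mu> x b"
    then have "\<forall>b\<in>UNIV. 0 \<le> \<pi> x b - \<mu> x b"
      by (simp add: not_less)
    moreover have "(\<Sum>b\<in>UNIV. \<pi> x b - \<mu> x b) = 0"
      using assms(1,2) by (simp add: is_policy_def sum_subtractf)
    ultimately have "\<forall>b. \<pi> x b = \<mu> x b"
      using sum_nonneg_eq_0_iff[of UNIV "\<lambda>b. \<pi> x b - \<mu> x b"] by simp
    then show False
      using assms(3) by auto
  qed
  then show ?thesis
    using that by blast
qed

lemma min_le_min_mix_policy:
  assumes "0 \<le> \<alpha>" "\<alpha> \<le> 1"
  shows "min (\<mu> y b) (\<pi> y b) \<le> min (\<mu> y b) (mix_policy \<alpha> \<pi> \<mu> y b)"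
proof -
  have "\<alpha> * min (\<mu> y b) (\<pi> y b) + (1 - \<alpha>) * min (\<mu> y b) (\<pi> y b) \<le> mix_policy \<alpha> \<pi> \<mu> y b"
    unfolding mix_policy_def using assms by (intro add_mono mult_left_mono) auto
  then show ?thesis
    by (simp add: algebra_simps)
qed

lemma min_mix_policy_lower_bound:
  assumes "0 \<le> \<alpha>" "0 \<le> \<pi> y b" "0 \<le> \<mu> y b"
  shows "(1 - \<alpha>) * \<mu> y b \<le> min (\<mu> y b) (mix_policy \<alpha> \<pi> \<mu> y b)"
  using assms by (simp add: mix_policy_def algebra_simps)

lemma min_less_min_mix_policy:
  assumes "\<alpha> < 1" "\<pi> y b < \<mu> y b"
  shows "min (\<mu> y b) (\<pi> y b) < min (\<mu> y b) (mix_policy \<alpha> \<pi> \<mu> y b)"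
proof -
  have "(1 - \<alpha>) * \<pi> y b < (1 - \<alpha>) * \<mu> y b"
    using assms by simp
  then show ?thesis
    using assms by (simp add: mix_policy_def algebra_simps)
qed

lemma trace_kernel_le_mix_policy:
  assumes "is_kernel P" "0 \<le> \<alpha>" "\<alpha> \<le> 1"
  shows "trace_kernel P \<pi> \<mu> p q \<le> trace_kernel P (mix_policy \<alpha> \<pi> \<mu>) \<mu> p q"
  using assms by (intro sa_kernel_mono min_le_min_mix_policy)

lemma alpha_retrace_rate_le:
  assumes K: "is_kernel P" and \<pi>: "is_policy \<pi>" and \<mu>: "is_policy \<mu>"
    and \<gamma>: "0 \<le> \<gamma>" "\<gamma> < 1" and \<alpha>: "0 \<le> \<alpha>" "\<alpha> \<le> 1"
  shows "contraction_rate (alpha_retrace P \<gamma> r \<pi> \<mu> \<alpha>) \<le> contraction_rate (alpha_retrace P \<gamma> r \<pi> \<mu> 1)"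
proof -
  have \<pi>\<alpha>: "is_policy (mix_policy \<alpha> \<pi> \<mu>)"
    using \<pi> \<mu> \<alpha> by (rule is_policy_mix_policy)
  note A = stochastic_sa_kernel[OF K \<pi>\<alpha>] and B = trace_kernel_le[OF K \<pi>\<alpha> \<mu>]
  show ?thesis
    unfolding alpha_retrace_eq_retrace mix_policy_1
      contraction_rate_retrace[OF K \<pi>\<alpha> \<mu> \<gamma>] contraction_rate_retrace[OF K \<pi> \<mu> \<gamma>]
  proof (rule supnorm_mono)
    show "0 \<le> retrace_coeff (trace_kernel P (mix_policy \<alpha> \<pi> \<mu>) \<mu>) \<gamma> (x, a)" for x a
      using A B \<gamma> by (rule retrace_coeff_nonneg)
    show "retrace_coeff (trace_kernel P (mix_policy \<alpha> \<pi> \<mu>) \<mu>) \<gamma> (x, a)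
        \<le> retrace_coeff (trace_kernel P \<pi> \<mu>) \<gamma> (x, a)" for x a
      using substochastic_le_stochastic[OF A B] trace_kernel_le(1)[OF K \<pi> \<mu>]
        trace_kernel_le_mix_policy[OF K \<alpha>] \<gamma>
      by (rule retrace_coeff_antimono)
  qed
qed

lemma scaled_sa_kernel_le_trace_kernel_mix_policy:
  assumes "is_kernel P" "is_policy \<pi>" "is_policy \<mu>" "0 \<le> \<alpha>"
  shows "(1 - \<alpha>) * sa_kernel P \<mu> p q \<le> trace_kernel P (mix_policy \<alpha> \<pi> \<mu>) \<mu> p q"
proof -
  have "P (fst p) (snd p) (fst q) * ((1 - \<alpha>) * \<mu> (fst q) (snd q))
      \<le> P (fst p) (snd p) (fst q) * min (\<mu> (fst q) (snd q)) (mix_policy \<alpha> \<pi> \<mu> (fst q) (snd q))"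
    using assms by (intro mult_left_mono min_mix_policy_lower_bound) (auto simp: is_kernel_def is_policy_def)
  then show ?thesis
    by (simp add: sa_kernel_def mult.left_commute)
qed

lemma retrace_coeff_mix_policy_less:
  assumes K: "is_kernel P" and \<pi>: "is_policy \<pi>" and \<mu>: "is_policy \<mu>"
    and \<gamma>: "0 < \<gamma>" "\<gamma> < 1" and \<alpha>: "0 \<le> \<alpha>" "\<alpha> < 1"
    and D: "\<forall>x a. distinguishable P \<pi> \<mu> x a"
  shows "retrace_coeff (trace_kernel P (mix_policy \<alpha> \<pi> \<mu>) \<mu>) \<gamma> (x, a)
    < retrace_coeff (trace_kernel P \<pi> \<mu>) \<gamma> (x, a)"
proof -
  have \<pi>\<alpha>: "is_policy (mix_policy \<alpha> \<pi> \<mu>)"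
    using \<pi> \<mu> \<alpha> by (intro is_policy_mix_policy) auto
  obtain t y b x' where reach: "0 < mpow (sa_kernel P \<mu>) t (x, a) (y, b)"
    and "0 < P y b x'" and "\<pi> x' \<noteq> \<mu> x'"
    using distinguishable_reach[OF K \<mu> D] by blast
  moreover obtain b' where "\<pi> x' b' < \<mu> x' b'"
    using is_policy_neq_imp_less[OF \<pi> \<mu> \<open>\<pi> x' \<noteq> \<mu> x'\<close>] by blast
  ultimately have loss: "(\<Sum>q\<in>UNIV. trace_kernel P \<pi> \<mu> (y, b) q)
      < (\<Sum>q\<in>UNIV. trace_kernel P (mix_policy \<alpha> \<pi> \<mu>) \<mu> (y, b) q)"
    using K \<alpha> by (intro sa_kernel_row_sum_strict_mono min_le_min_mix_policy min_less_min_mix_policy)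
      auto
  have "\<And>p q. 0 \<le> sa_kernel P \<mu> p q"
    using K \<mu> by (intro sa_kernel_nonneg) (auto simp: is_policy_def)
  from this _ scaled_sa_kernel_le_trace_kernel_mix_policy[OF K \<pi> \<mu> \<alpha>(1)] reach
  have reach_\<alpha>: "0 < mpow (trace_kernel P (mix_policy \<alpha> \<pi> \<mu>) \<mu>) t (x, a) (y, b)"
    by (rule mpow_pos_of_scaled_le) (use \<alpha> in simp)
  from substochastic_le_stochastic[OF stochastic_sa_kernel[OF K \<pi>\<alpha>] trace_kernel_le[OF K \<pi>\<alpha> \<mu>]]
    trace_kernel_le(1)[OF K \<pi> \<mu>] trace_kernel_le_mix_policy[OF K \<alpha>(1) less_imp_le[OF \<alpha>(2)]] \<gamma>
    reach_\<alpha> loss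
  show ?thesis
    by (rule retrace_coeff_strict_antimono)
qed

lemma alpha_retrace_rate_less:
  assumes K: "is_kernel P" and \<pi>: "is_policy \<pi>" and \<mu>: "is_policy \<mu>"
    and \<gamma>: "0 < \<gamma>" "\<gamma> < 1" and \<alpha>: "0 \<le> \<alpha>" "\<alpha> < 1"
    and D: "\<forall>x a. distinguishable P \<pi> \<mu> x a"
  shows "contraction_rate (alpha_retrace P \<gamma> r \<pi> \<mu> \<alpha>) < contraction_rate (alpha_retrace P \<gamma> r \<pi> \<mu> 1)"
proof -
  have \<pi>\<alpha>: "is_policy (mix_policy \<alpha> \<pi> \<mu>)"
    using \<pi> \<mu> \<alpha> by (intro is_policy_mix_policy) auto
  have \<gamma>': "0 \<le> \<gamma>" "\<gamma> < 1" using \<gamma> by simp_all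
  show ?thesis
    unfolding alpha_retrace_eq_retrace mix_policy_1
      contraction_rate_retrace[OF K \<pi>\<alpha> \<mu> \<gamma>'] contraction_rate_retrace[OF K \<pi> \<mu> \<gamma>']
  proof (rule supnorm_strict_mono)
    show "0 \<le> retrace_coeff (trace_kernel P (mix_policy \<alpha> \<pi> \<mu>) \<mu>) \<gamma> (x, a)" for x a
      using stochastic_sa_kernel[OF K \<pi>\<alpha>] trace_kernel_le[OF K \<pi>\<alpha> \<mu>] \<gamma>'
      by (rule retrace_coeff_nonneg)
    show "retrace_coeff (trace_kernel P (mix_policy \<alpha> \<pi> \<mu>) \<mu>) \<gamma> (x, a)
        < retrace_coeff (trace_kernel P \<pi> \<mu>) \<gamma> (x, a)" for x a
      using assms by (rule retrace_coeff_mix_policy_less)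
  qed
qed

lemma abs_policy_expectation_diff_le:
  fixes Q Q' :: "'x::finite \<Rightarrow> 'a::finite \<Rightarrow> real"
  assumes \<nu>': "is_policy \<nu>'" and \<delta>: "(\<Sum>c\<in>UNIV. \<bar>\<nu>' z c - \<nu> z c\<bar>) \<le> \<delta>"
  shows "\<bar>(\<Sum>c\<in>UNIV. \<nu>' z c * Q' z c) - (\<Sum>c\<in>UNIV. \<nu> z c * Q z c)\<bar>
    \<le> supnorm (\<lambda>x a. Q' x a - Q x a) + \<delta> * supnorm Q"
proof -
  have "(\<Sum>c\<in>UNIV. \<nu>' z c * Q' z c) - (\<Sum>c\<in>UNIV. \<nu> z c * Q z c)
      = (\<Sum>c\<in>UNIV. \<nu>' z c * (Q' z c - Q z c)) + (\<Sum>c\<in>UNIV. (\<nu>' z c - \<nu> z c) * Q z c)"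
    by (simp add: algebra_simps flip: sum_subtractf sum.distrib)
  moreover have "\<bar>\<Sum>c\<in>UNIV. \<nu>' z c * (Q' z c - Q z c)\<bar> \<le> supnorm (\<lambda>x a. Q' x a - Q x a)"
    using \<nu>' unfolding is_policy_def
    by (intro abs_weighted_sum_le) (auto simp: abs_le_supnorm[of "\<lambda>x a. Q' x a - Q x a", simplified])
  moreover have "\<bar>\<Sum>c\<in>UNIV. (\<nu>' z c - \<nu> z c) * Q z c\<bar> \<le> (\<Sum>c\<in>UNIV. \<bar>\<nu>' z c - \<nu> z c\<bar> * supnorm Q)"
    by (intro sum_abs[THEN order_trans] sum_mono) (simp add: abs_mult abs_le_supnorm mult_left_mono)
  moreover have "(\<Sum>c\<in>UNIV. \<bar>\<nu>' z c - \<nu> z c\<bar> * supnorm Q) \<le> \<delta> * supnorm Q"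
    using \<delta> supnorm_nonneg[of Q] by (simp add: mult_right_mono flip: sum_distrib_right)
  ultimately show ?thesis
    by linarith
qed

lemma Qfun_dist_le:
  assumes K: "is_kernel P" and \<nu>: "is_policy \<nu>" and \<nu>': "is_policy \<nu>'" and \<gamma>: "0 \<le> \<gamma>" "\<gamma> < 1"
    and \<delta>: "\<And>z. (\<Sum>c\<in>UNIV. \<bar>\<nu>' z c - \<nu> z c\<bar>) \<le> \<delta>"
  shows "(1 - \<gamma>) * supnorm (\<lambda>x a. Qfun P \<gamma> r \<nu>' x a - Qfun P \<gamma> r \<nu> x a)
    \<le> \<gamma> * \<delta> * supnorm (Qfun P \<gamma> r \<nu>)"
proof -
  define Q where "Q = Qfun P \<gamma> r \<nu>"
  define Q' where "Q' = Qfun P \<gamma> r \<nu>'"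
  define S where "S = supnorm (\<lambda>x a. Q' x a - Q x a)"
  have next_step: "\<bar>(\<Sum>c\<in>UNIV. \<nu>' z c * Q' z c) - (\<Sum>c\<in>UNIV. \<nu> z c * Q z c)\<bar> \<le> S + \<delta> * supnorm Q"
    for z
    unfolding S_def using \<nu>' \<delta>[of z] by (rule abs_policy_expectation_diff_le)
  have "\<bar>Q' x a - Q x a\<bar> \<le> \<gamma> * (S + \<delta> * supnorm Q)" for x a
  proof -
    have "Q' x a - Q x a = \<gamma> * (\<Sum>z\<in>UNIV. P x a z *
        ((\<Sum>c\<in>UNIV. \<nu>' z c * Q' z c) - (\<Sum>c\<in>UNIV. \<nu> z c * Q z c)))"
      unfolding Q_def Q'_def
      by (subst (1 2) Qfun_bellman[OF K _ \<gamma>]) (simp_all add: \<nu> \<nu>' algebra_simps sum_subtractf)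
    moreover have "\<bar>\<Sum>z\<in>UNIV. P x a z *
        ((\<Sum>c\<in>UNIV. \<nu>' z c * Q' z c) - (\<Sum>c\<in>UNIV. \<nu> z c * Q z c))\<bar> \<le> S + \<delta> * supnorm Q"
      using K next_step unfolding is_kernel_def by (intro abs_weighted_sum_le) auto
    ultimately show ?thesis
      using \<gamma> by (simp add: abs_mult mult_left_mono)
  qed
  then have "S \<le> \<gamma> * (S + \<delta> * supnorm Q)"
    unfolding S_def by (rule supnorm_le)
  then show ?thesis
    unfolding S_def Q_def Q'_def by (simp add: algebra_simps)
qed

lemma mix_policy_dist_le:
  assumes "is_policy \<pi>" "is_policy \<mu>" "\<alpha> \<le> 1"
  shows "(\<Sum>c\<in>UNIV. \<bar>mix_policy \<alpha> \<pi> \<mu> z c - \<pi> z c\<bar>) \<le> 2 * (1 - \<alpha>)"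
proof -
  have "mix_policy \<alpha> \<pi> \<mu> z c - \<pi> z c = (1 - \<alpha>) * (\<mu> z c - \<pi> z c)" for c
    by (simp add: mix_policy_def algebra_simps)
  then have "(\<Sum>c\<in>UNIV. \<bar>mix_policy \<alpha> \<pi> \<mu> z c - \<pi> z c\<bar>) = (1 - \<alpha>) * (\<Sum>c\<in>UNIV. \<bar>\<mu> z c - \<pi> z c\<bar>)"
    using assms(3) by (simp add: abs_mult sum_distrib_left)
  also have "\<dots> \<le> (1 - \<alpha>) * (\<Sum>c\<in>UNIV. \<mu> z c + \<pi> z c)"
  proof (intro mult_left_mono sum_mono)
    fix c
    have "0 \<le> \<mu> z c" "0 \<le> \<pi> z c"
      using assms(1,2) by (auto simp: is_policy_def)
    then show "\<bar>\<mu> z c - \<pi> z c\<bar> \<le> \<mu> z c + \<pi> z c"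
      by (simp add: abs_le_iff)
  qed (use assms(3) in simp)
  also have "\<dots> = 2 * (1 - \<alpha>)"
    using assms by (simp add: is_policy_def sum.distrib)
  finally show ?thesis .
qed

lemma Qfun_mix_policy_close:
  assumes K: "is_kernel P" and \<pi>: "is_policy \<pi>" and \<mu>: "is_policy \<mu>"
    and \<gamma>: "0 \<le> \<gamma>" "\<gamma> < 1" and "0 < \<epsilon>"
  obtains \<alpha> where "0 < \<alpha>" "\<alpha> < 1"
    "\<And>x a. \<bar>Qfun P \<gamma> r (mix_policy \<alpha> \<pi> \<mu>) x a - Qfun P \<gamma> r \<pi> x a\<bar> < \<epsilon>"
proof -
  define M where "M = supnorm (Qfun P \<gamma> r \<pi>)"
  define \<delta> where "\<delta> = min (1/2) (\<epsilon> * (1 - \<gamma>) / (2 * (M + 1)))"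
  have "0 \<le> M"
    unfolding M_def by (rule supnorm_nonneg)
  have \<delta>_pos: "0 < \<delta>"
    using \<gamma> \<open>0 < \<epsilon>\<close> \<open>0 \<le> M\<close> by (simp add: \<delta>_def)
  have "\<delta> \<le> 1/2"
    unfolding \<delta>_def by (rule min.cobounded1)
  have "\<delta> \<le> \<epsilon> * (1 - \<gamma>) / (2 * (M + 1))"
    by (simp add: \<delta>_def)
  then have \<delta>_small: "\<delta> * (2 * (M + 1)) \<le> \<epsilon> * (1 - \<gamma>)"
    using \<open>0 \<le> M\<close> by (simp add: pos_le_divide_eq)
  define \<alpha> where "\<alpha> = 1 - \<delta>"
  have \<alpha>: "0 < \<alpha>" "\<alpha> < 1"
    using \<delta>_pos \<open>\<delta> \<le> 1/2\<close> by (auto simp: \<alpha>_def)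
  have "(1 - \<gamma>) * supnorm (\<lambda>x a. Qfun P \<gamma> r (mix_policy \<alpha> \<pi> \<mu>) x a - Qfun P \<gamma> r \<pi> x a)
      \<le> \<gamma> * (2 * \<delta>) * M"
  proof (unfold M_def, rule Qfun_dist_le[OF K \<pi> _ \<gamma>])
    show "is_policy (mix_policy \<alpha> \<pi> \<mu>)"
      using \<pi> \<mu> \<alpha> by (intro is_policy_mix_policy) auto
    show "(\<Sum>c\<in>UNIV. \<bar>mix_policy \<alpha> \<pi> \<mu> z c - \<pi> z c\<bar>) \<le> 2 * \<delta>" for z
      using mix_policy_dist_le[OF \<pi> \<mu>, of \<alpha> z] \<alpha> by (simp add: \<alpha>_def)
  qed
  also have "\<dots> \<le> 2 * \<delta> * M"
    using \<gamma> \<delta>_pos \<open>0 \<le> M\<close> mult_left_le_one_le[of "2 * \<delta> * M" \<gamma>] by (simp add: mult.assoc)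
  also have "\<dots> < \<delta> * (2 * (M + 1))"
    using \<delta>_pos by (simp add: algebra_simps)
  also have "\<dots> \<le> \<epsilon> * (1 - \<gamma>)"
    by (rule \<delta>_small)
  finally have "supnorm (\<lambda>x a. Qfun P \<gamma> r (mix_policy \<alpha> \<pi> \<mu>) x a - Qfun P \<gamma> r \<pi> x a) < \<epsilon>"
    using \<gamma> by (simp add: mult.commute)
  then show ?thesis
    using that[OF \<alpha>] abs_le_supnorm le_less_trans by blast
qed

section \<open>Greedy actions\<close>

lemma greedy_eq_singletonI:
  assumes "\<And>b. b \<noteq> a \<Longrightarrow> Q x b < Q x a"
  shows "greedy Q x = {a}"
proof -
  have "Q x c \<le> Q x a" for c
    using assms[of c] by (cases "c = a") auto
  moreover have "b = a" if "\<forall>c. Q x c \<le> Q x b" for b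
    using assms[of b] spec[OF that, of a] by (cases "b = a") auto
  ultimately show ?thesis
    unfolding greedy_def by blast
qed

lemma greedy_unique_less:
  assumes "\<exists>!a. a \<in> greedy Q x" "b \<noteq> (THE a. a \<in> greedy Q x)"
  shows "Q x b < Q x (THE a. a \<in> greedy Q x)"
proof -
  have opt: "(THE a. a \<in> greedy Q x) \<in> greedy Q x"
    by (rule theI'[OF assms(1)])
  have "b \<notin> greedy Q x"
    using the1_equality[OF assms(1)] assms(2) by blast
  then obtain c where "Q x b < Q x c"
    unfolding greedy_def by (auto simp: not_le)
  moreover have "Q x c \<le> Q x (THE a. a \<in> greedy Q x)"
    using opt unfolding greedy_def by blast
  ultimately show ?thesis
    by linarith
qed

lemma greedy_stable:
  fixes Q :: "'x::finite \<Rightarrow> 'a::finite \<Rightarrow> real"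
  assumes unique: "\<forall>x. \<exists>!a. a \<in> greedy Q x"
  obtains g where "0 < g"
    "\<And>Q' x. (\<And>x a. \<bar>Q' x a - Q x a\<bar> < g) \<Longrightarrow> greedy Q' x = {THE a. a \<in> greedy Q x}"
proof -
  define opt where "opt x = (THE a. a \<in> greedy Q x)" for x
  have gap: "Q x b < Q x (opt x)" if "b \<noteq> opt x" for x b
    using unique that unfolding opt_def by (intro greedy_unique_less) auto
  define G where "G = insert 1 ((\<lambda>(x, b). Q x (opt x) - Q x b) ` {(x, b). b \<noteq> opt x})"
  have "finite G" "0 < Min G"
    using gap by (auto simp: G_def)
  have Min_le_gap: "Min G \<le> Q x (opt x) - Q x b" if "b \<noteq> opt x" for x b
    using \<open>finite G\<close> that by (intro Min_le) (auto simp: G_def)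
  show ?thesis
  proof (rule that[of "Min G / 2"])
    fix Q' x
    assume close: "\<And>x a. \<bar>Q' x a - Q x a\<bar> < Min G / 2"
    have "Q' x b < Q' x (opt x)" if "b \<noteq> opt x" for b
      using Min_le_gap[OF that] close[of x b, unfolded abs_less_iff]
        close[of x "opt x", unfolded abs_less_iff]
      by linarith
    then show "greedy Q' x = {THE a. a \<in> greedy Q x}"
      unfolding opt_def by (rule greedy_eq_singletonI)
  qed (use \<open>0 < Min G\<close> in simp)
qed

theorem proposition3p3:
  fixes P :: "'x::finite \<Rightarrow> 'a::finite \<Rightarrow> 'x \<Rightarrow> real"
    and r :: "'x \<Rightarrow> 'a \<Rightarrow> real"
    and \<gamma> :: real
    and \<pi> \<mu> :: "'x \<Rightarrow> 'a \<Rightarrow> real"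
  assumes "is_kernel P"
    and "0 \<le> \<gamma>" and "\<gamma> < 1"
    and "is_policy \<pi>" and "is_policy \<mu>"
    and "\<forall>x. \<exists>!a. a \<in> greedy (Qfun P \<gamma> r \<pi>) x"
  shows "\<exists>\<alpha>. 0 < \<alpha> \<and> \<alpha> < 1
    \<and> (\<forall>x. greedy (fixed_point (alpha_retrace P \<gamma> r \<pi> \<mu> \<alpha>)) x
             = {THE a. a \<in> greedy (Qfun P \<gamma> r \<pi>) x})
    \<and> contraction_rate (alpha_retrace P \<gamma> r \<pi> \<mu> \<alpha>)
        \<le> contraction_rate (alpha_retrace P \<gamma> r \<pi> \<mu> 1)
    \<and> ((0 < \<gamma> \<and> (\<forall>x a. distinguishable P \<pi> \<mu> x a)) \<longrightarrow>
        contraction_rate (alpha_retrace P \<gamma> r \<pi> \<mu> \<alpha>)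
          < contraction_rate (alpha_retrace P \<gamma> r \<pi> \<mu> 1))"
proof -
  note K = assms(1) and \<gamma> = assms(2,3) and \<pi> = assms(4) and \<mu> = assms(5)
  obtain g where "0 < g" and stable: "\<And>Q' x. (\<And>x a. \<bar>Q' x a - Qfun P \<gamma> r \<pi> x a\<bar> < g)
      \<Longrightarrow> greedy Q' x = {THE a. a \<in> greedy (Qfun P \<gamma> r \<pi>) x}"
    using greedy_stable[OF assms(6)] by blast
  obtain \<alpha> where \<alpha>: "0 < \<alpha>" "\<alpha> < 1"
    and close: "\<And>x a. \<bar>Qfun P \<gamma> r (mix_policy \<alpha> \<pi> \<mu>) x a - Qfun P \<gamma> r \<pi> x a\<bar> < g"
    using Qfun_mix_policy_close[OF K \<pi> \<mu> \<gamma> \<open>0 < g\<close>] by blast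
  have \<pi>\<alpha>: "is_policy (mix_policy \<alpha> \<pi> \<mu>)"
    using \<pi> \<mu> \<alpha> by (intro is_policy_mix_policy) auto
  have fixed: "fixed_point (alpha_retrace P \<gamma> r \<pi> \<mu> \<alpha>) = Qfun P \<gamma> r (mix_policy \<alpha> \<pi> \<mu>)"
    unfolding alpha_retrace_eq_retrace by (rule fixed_point_retrace[OF K \<pi>\<alpha> \<mu> \<gamma>])
  show ?thesis
  proof (intro exI[of _ \<alpha>] conjI impI allI)
    show "greedy (fixed_point (alpha_retrace P \<gamma> r \<pi> \<mu> \<alpha>)) x = {THE a. a \<in> greedy (Qfun P \<gamma> r \<pi>) x}"
      for x
      unfolding fixed using close by (rule stable)
    show "contraction_rate (alpha_retrace P \<gamma> r \<pi> \<mu> \<alpha>) \<le> contraction_rate (alpha_retrace P \<gamma> r \<pi> \<mu> 1)"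
      using K \<pi> \<mu> \<gamma> \<alpha> by (intro alpha_retrace_rate_le) auto
    show "contraction_rate (alpha_retrace P \<gamma> r \<pi> \<mu> \<alpha>) < contraction_rate (alpha_retrace P \<gamma> r \<pi> \<mu> 1)"
      if "0 < \<gamma> \<and> (\<forall>x a. distinguishable P \<pi> \<mu> x a)"
      using K \<pi> \<mu> \<gamma> \<alpha> that by (intro alpha_retrace_rate_less) auto
  qed (use \<alpha> in auto)
qed

end
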